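(* Let $q$ be a power of an odd prime $p$, let $a,b\in\mathbb{F}_q$ with $b\ne0$, and let $n\ge2$ be an integer. Let $r\ge0$ be such that $p^r$ divides $n+1$ but $p^{r+1}$ does not, and let $m\ge0$ be defined by $n+1=p^r(m+1)$. Assume $r\ge1$. Let $\mu\in\mathbb{F}_{q^2}$ with $\mu^2=-1$. If $m>0$, then $\hat C_n(a,b)$ is LCD if and only if $$a/b\notin\{-\mu/b+2,\,-\mu/b-2,\,\mu/b+2,\,\mu/b-2\}\cup\{-\mu/b+\theta^i+\theta^{-i}:1\le i\le m\}\cup\{\mu/b+\theta^i+\theta^{-i}:1\le i\le m\},$$ where $\theta\in\overline{\mathbb{F}}_q$ is a primitive $2(m+1)$-th root of unity. If $m=0$, then $\hat C_n(a,b)$ is LCD if and only if $a/b\notin\{-\mu/b+2,\,-\mu/b-2,\,\mu/b+2,\,\mu/b-2\}$.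
   Context: For $a,b\in\mathbb{F}_q$ and $n\ge 2$, $\hat T_n(a,b)$ denotes the $n\times n$ symmetric tridiagonal Toeplitz matrix over $\mathbb{F}_q$ with all diagonal entries equal to $a$, all entries on the first super- and sub-diagonals equal to $b$, and all other entries $0$. $\hat C_n(a,b)$ is the $[2n,n]$ linear code over $\mathbb{F}_q$ with generator matrix $[I_n\mid \hat T_n(a,b)]$. A linear code $C$ is LCD if $C\cap C^\perp=\{0\}$ (Euclidean dual). *)

theory Defs
  imports "Jordan_Normal_Form.Matrix"
begin

definition tridiag_toeplitz :: "nat \<Rightarrow> 'a::field \<Rightarrow> 'a \<Rightarrow> 'a mat" where
  "tridiag_toeplitz n a b = mat n n (\<lambda>(i,j). if i = j then a else if i = j + 1 \<or> j = i + 1 then b else 0)"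

definition gen_matrix :: "nat \<Rightarrow> 'a::field \<Rightarrow> 'a \<Rightarrow> 'a mat" where
  "gen_matrix n a b = mat n (2 * n)
     (\<lambda>(i,j). if j < n then (if i = j then 1 else 0) else tridiag_toeplitz n a b $$ (i, j - n))"

definition lin_code :: "'a::field mat \<Rightarrow> 'a vec set" where
  "lin_code G = {transpose_mat G *\<^sub>v x | x. x \<in> carrier_vec (dim_row G)}"

definition dual_code :: "nat \<Rightarrow> 'a::field vec set \<Rightarrow> 'a vec set" where
  "dual_code len C = {y \<in> carrier_vec len. \<forall>c\<in>C. c \<bullet> y = 0}"

definition is_LCD :: "nat \<Rightarrow> 'a::field vec set \<Rightarrow> bool" where
  "is_LCD len C \<longleftrightarrow> C \<inter> dual_code len C = {0\<^sub>v len}"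

definition hatC :: "nat \<Rightarrow> 'a::field \<Rightarrow> 'a \<Rightarrow> 'a vec set" where
  "hatC n a b = lin_code (gen_matrix n a b)"

definition primitive_root_of_unity :: "nat \<Rightarrow> 'a::field \<Rightarrow> bool" where
  "primitive_root_of_unity k \<theta> \<longleftrightarrow> 0 < k \<and> \<theta> ^ k = 1 \<and> (\<forall>j. 0 < j \<and> j < k \<longrightarrow> \<theta> ^ j \<noteq> 1)"

definition field_embedding :: "('a::field \<Rightarrow> 'b::field) \<Rightarrow> bool" where
  "field_embedding f \<longleftrightarrow> inj f \<and> f 1 = 1 \<and> (\<forall>x y. f (x + y) = f x + f y) \<and> (\<forall>x y. f (x * y) = f x * f y)"

end

theory Submission
  imports Defs "Jordan_Normal_Form.Char_Poly" "HOL-Number_Theory.Cong"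
begin

(*
  By Massey's criterion the code generated by G = [I | T] is LCD iff G G^T = I + T^2 is
  nonsingular. If mu^2 = -1 then I + T^2 = (T - mu)(T + mu), so the code is LCD iff neither
  mu nor -mu is an eigenvalue of T = T_n(a,b). Every row of T w = ev w is the three-term
  recurrence of the Lucas polynomials U_0 = 0, U_1 = 1, U_(k+2) = x U_(k+1) - U_k at
  x = (ev - a)/b, with the boundary condition U_(n+1)(x) = 0; hence ev is an eigenvalue iff
  U_(n+1)((ev - a)/b) = 0. Binet's formula in F[t]/(t^2 - x t + 1) together with the Frobenius
  map gives U_(p^r k)(x) = U_k(x)^(p^r) (x^2 - 4)^((p^r - 1)/2) for x^2 <> 4, while
  U_(p^r k)(2) and U_(p^r k)(-2) are +-p^r k = 0. Finally U_(m+1) has the m distinct roots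
  theta^i + theta^(-i), 1 <= i <= m, which are all of its roots by degree.
*)

section \<open>Massey's criterion and the factorization of I + T^2\<close>

lemma transpose_mult_vec_in_dual_code_iff:
  fixes G :: "'a::field mat"
  assumes G: "G \<in> carrier_mat k len" and x: "x \<in> carrier_vec k"
  shows "transpose_mat G *\<^sub>v x \<in> dual_code len (lin_code G) \<longleftrightarrow> G * transpose_mat G *\<^sub>v x = 0\<^sub>v k"
proof -
  let ?v = "G * transpose_mat G *\<^sub>v x"
  have v: "?v \<in> carrier_vec k" using G by (intro carrier_vecI) simp
  have Gx: "transpose_mat G *\<^sub>v x \<in> carrier_vec len" using G by (intro carrier_vecI) simp
  have "(transpose_mat G *\<^sub>v y) \<bullet> (transpose_mat G *\<^sub>v x) = y \<bullet> ?v" if y: "y \<in> carrier_vec k" for y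
    using transpose_vec_mult_scalar[OF G Gx y] G x by simp
  then have "transpose_mat G *\<^sub>v x \<in> dual_code len (lin_code G) \<longleftrightarrow> (\<forall>y\<in>carrier_vec k. y \<bullet> ?v = 0)"
    using G Gx unfolding dual_code_def lin_code_def by fastforce
  also have "\<dots> \<longleftrightarrow> ?v = 0\<^sub>v k"
  proof
    assume "\<forall>y\<in>carrier_vec k. y \<bullet> ?v = 0"
    then have "?v $ i = 0" if "i < k" for i
      using scalar_prod_left_unit[OF v that] that unit_vec_carrier by metis
    then show "?v = 0\<^sub>v k" using v G by (intro eq_vecI) auto
  qed simp
  finally show ?thesis .
qed

lemma is_LCD_lin_code_iff_det:
  fixes G :: "'a::field mat"
  assumes G: "G \<in> carrier_mat k len"
    and inj: "\<And>x. x \<in> carrier_vec k \<Longrightarrow> transpose_mat G *\<^sub>v x = 0\<^sub>v len \<Longrightarrow> x = 0\<^sub>v k"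
  shows "is_LCD len (lin_code G) \<longleftrightarrow> det (G * transpose_mat G) \<noteq> 0"
proof -
  let ?E = "\<lambda>x. transpose_mat G *\<^sub>v x"
  let ?Z = "{x \<in> carrier_vec k. G * transpose_mat G *\<^sub>v x = 0\<^sub>v k}"
  have zero: "?E (0\<^sub>v k) = 0\<^sub>v len" "G * transpose_mat G *\<^sub>v 0\<^sub>v k = 0\<^sub>v k"
    using G by (auto intro!: eq_vecI simp: scalar_prod_def)
  have code: "lin_code G = ?E ` carrier_vec k"
    using G by (simp add: lin_code_def Setcompr_eq_image)
  have "lin_code G \<inter> dual_code len (lin_code G) = ?E ` ?Z"
    using transpose_mult_vec_in_dual_code_iff[OF G] unfolding code by auto
  moreover have "?E ` ?Z = {0\<^sub>v len} \<longleftrightarrow>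
      (\<forall>x\<in>carrier_vec k. G * transpose_mat G *\<^sub>v x = 0\<^sub>v k \<longrightarrow> ?E x = 0\<^sub>v len)"
  proof
    show "\<forall>x\<in>carrier_vec k. G * transpose_mat G *\<^sub>v x = 0\<^sub>v k \<longrightarrow> ?E x = 0\<^sub>v len"
      if "?E ` ?Z = {0\<^sub>v len}" using that by auto
    have "?E (0\<^sub>v k) \<in> ?E ` ?Z" using zero by (intro imageI) simp
    then show "?E ` ?Z = {0\<^sub>v len}"
      if "\<forall>x\<in>carrier_vec k. G * transpose_mat G *\<^sub>v x = 0\<^sub>v k \<longrightarrow> ?E x = 0\<^sub>v len"
      using that zero by auto
  qed
  ultimately have "is_LCD len (lin_code G) \<longleftrightarrow>
      (\<forall>x\<in>carrier_vec k. G * transpose_mat G *\<^sub>v x = 0\<^sub>v k \<longrightarrow> ?E x = 0\<^sub>v len)"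
    unfolding is_LCD_def by simp
  also have "\<dots> \<longleftrightarrow> (\<forall>x\<in>carrier_vec k. G * transpose_mat G *\<^sub>v x = 0\<^sub>v k \<longrightarrow> x = 0\<^sub>v k)"
    using inj zero by auto
  also have "\<dots> \<longleftrightarrow> det (G * transpose_mat G) \<noteq> 0"
    using det_0_iff_vec_prod_zero_field[of "G * transpose_mat G" k] G by auto
  finally show ?thesis .
qed

lemma dim_tridiag_toeplitz [simp]:
  "dim_row (tridiag_toeplitz n a b) = n" "dim_col (tridiag_toeplitz n a b) = n"
  by (simp_all add: tridiag_toeplitz_def)

lemma tridiag_toeplitz_carrier: "tridiag_toeplitz n a b \<in> carrier_mat n n"
  by (intro carrier_matI) simp_all

lemma gen_matrix_carrier [simp]: "gen_matrix n a b \<in> carrier_mat n (2 * n)"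
  by (simp add: gen_matrix_def)

lemma transpose_gen_matrix_mult_vec_nth:
  assumes x: "x \<in> carrier_vec n" and i: "i < n"
  shows "(transpose_mat (gen_matrix n a b) *\<^sub>v x) $ i = x $ i"
proof -
  have "(transpose_mat (gen_matrix n a b) *\<^sub>v x) $ i = (\<Sum>k<n. (if k = i then 1 else 0) * x $ k)"
    using x i by (simp add: gen_matrix_def scalar_prod_def lessThan_atLeast0)
  also have "\<dots> = (\<Sum>k<n. if k = i then x $ k else 0)" by (intro sum.cong) auto
  also have "\<dots> = x $ i" using i by simp
  finally show ?thesis .
qed

lemma gen_matrix_mult_transpose:
  "gen_matrix n a b * transpose_mat (gen_matrix n a b) = 1\<^sub>m n + tridiag_toeplitz n a b * tridiag_toeplitz n a b"
proof (rule eq_matI)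
  let ?G = "gen_matrix n a b" and ?T = "tridiag_toeplitz n a b"
  fix i j assume "i < dim_row (1\<^sub>m n + ?T * ?T)" "j < dim_col (1\<^sub>m n + ?T * ?T)"
  then have i: "i < n" and j: "j < n" by simp_all
  let ?g = "\<lambda>k. ?G $$ (i, k) * ?G $$ (j, k)"
  have "(?G * transpose_mat ?G) $$ (i, j) = (\<Sum>k\<in>{0..<2 * n}. ?g k)"
    using i j by (simp add: scalar_prod_def gen_matrix_def)
  also have "{0..<2 * n} = {0..<n} \<union> {n..<2 * n}" by auto
  also have "(\<Sum>k\<in>{0..<n} \<union> {n..<2 * n}. ?g k) = (\<Sum>k\<in>{0..<n}. ?g k) + (\<Sum>k\<in>{n..<2 * n}. ?g k)"
    by (rule sum.union_disjoint) auto
  also have "(\<Sum>k\<in>{0..<n}. ?g k) = (\<Sum>k\<in>{0..<n}. if k = i then (if j = i then 1 else 0) else 0)"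
    using i j by (intro sum.cong) (auto simp: gen_matrix_def)
  also have "\<dots> = 1\<^sub>m n $$ (i, j)" using i j by simp
  also have "(\<Sum>k\<in>{n..<2 * n}. ?g k) = (\<Sum>k\<in>{0..<n}. ?g (k + n))"
    by (rule sum.reindex_bij_witness[of _ "\<lambda>k. k + n" "\<lambda>k. k - n"]) auto
  also have "\<dots> = (\<Sum>k\<in>{0..<n}. ?T $$ (i, k) * ?T $$ (k, j))"
    using i j by (intro sum.cong refl) (auto simp: gen_matrix_def tridiag_toeplitz_def)
  also have "\<dots> = (?T * ?T) $$ (i, j)"
    using i j by (simp add: scalar_prod_def)
  finally show "(?G * transpose_mat ?G) $$ (i, j) = (1\<^sub>m n + ?T * ?T) $$ (i, j)" using i j by simp
qed (simp_all add: gen_matrix_def)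

lemma is_LCD_hatC_iff_det:
  "is_LCD (2 * n) (hatC n a b) \<longleftrightarrow> det (1\<^sub>m n + tridiag_toeplitz n a b * tridiag_toeplitz n a b) \<noteq> 0"
  unfolding hatC_def gen_matrix_mult_transpose[symmetric]
proof (rule is_LCD_lin_code_iff_det[OF gen_matrix_carrier])
  fix x :: "'a vec" assume x: "x \<in> carrier_vec n" and "transpose_mat (gen_matrix n a b) *\<^sub>v x = 0\<^sub>v (2 * n)"
  then have "x $ i = 0" if "i < n" for i
    using transpose_gen_matrix_mult_vec_nth[OF x that, of a b] that by simp
  then show "x = 0\<^sub>v n" using x by (intro eq_vecI) auto
qed

lemma char_matrix_mult_char_matrix_uminus:
  fixes A :: "'a::field mat"
  assumes A: "A \<in> carrier_mat n n" and \<mu>: "\<mu>\<^sup>2 = -1"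
  shows "char_matrix A \<mu> * char_matrix A (- \<mu>) = 1\<^sub>m n + A * A"
proof -
  have "(A + c \<cdot>\<^sub>m 1\<^sub>m n) * (A + d \<cdot>\<^sub>m 1\<^sub>m n) = A * A + (c + d) \<cdot>\<^sub>m A + (c * d) \<cdot>\<^sub>m 1\<^sub>m n" for c d
  proof -
    have "(A + c \<cdot>\<^sub>m 1\<^sub>m n) * (A + d \<cdot>\<^sub>m 1\<^sub>m n) = A * (A + d \<cdot>\<^sub>m 1\<^sub>m n) + (c \<cdot>\<^sub>m 1\<^sub>m n) * (A + d \<cdot>\<^sub>m 1\<^sub>m n)"
      using A by (intro add_mult_distrib_mat) auto
    also have "A * (A + d \<cdot>\<^sub>m 1\<^sub>m n) = A * A + d \<cdot>\<^sub>m A"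
      using A by (simp add: mult_add_distrib_mat[OF A] mult_smult_distrib[OF A one_carrier_mat])
    also have "(c \<cdot>\<^sub>m 1\<^sub>m n) * (A + d \<cdot>\<^sub>m 1\<^sub>m n) = c \<cdot>\<^sub>m (A + d \<cdot>\<^sub>m 1\<^sub>m n)"
      by (subst mult_smult_assoc_mat[OF one_carrier_mat, of _ n]) (use A in auto)
    finally show ?thesis using A by (intro eq_matI) (auto simp: algebra_simps)
  qed
  moreover have "char_matrix A e = A + (- e) \<cdot>\<^sub>m 1\<^sub>m n" for e
    using A unfolding char_matrix_def by simp
  ultimately show ?thesis using A \<mu> by (intro eq_matI) (auto simp: power2_eq_square)
qed

lemma det_one_plus_square_eq_0_iff:
  fixes A :: "'a::field mat"
  assumes A: "A \<in> carrier_mat n n" and \<mu>: "\<mu>\<^sup>2 = -1"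
  shows "det (1\<^sub>m n + A * A) = 0 \<longleftrightarrow> eigenvalue A \<mu> \<or> eigenvalue A (- \<mu>)"
  using A by (simp add: char_matrix_mult_char_matrix_uminus[OF A \<mu>, symmetric] det_mult[of _ n]
      eigenvalue_det[OF A])

section \<open>Lucas polynomials and tridiagonal Toeplitz matrices\<close>

(* U_k(x, 1) in the notation of Lucas sequences; U_(k+1)(2 y) is the Chebyshev polynomial of
   the second kind U_k(y). *)
fun lucasU :: "nat \<Rightarrow> 'a::comm_ring_1 poly" where
  "lucasU 0 = 0"
| "lucasU (Suc 0) = 1"
| "lucasU (Suc (Suc k)) = [:0, 1:] * lucasU (Suc k) - lucasU k"

lemma degree_lucasU_le: "degree (lucasU k :: 'a::comm_ring_1 poly) \<le> k - 1"
proof (induction k rule: lucasU.induct)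
  case (3 k)
  have "degree ([:0, 1:] * lucasU (Suc k) :: 'a poly) \<le> Suc k"
    using degree_mult_le[of "[:0, 1:]" "lucasU (Suc k) :: 'a poly"] 3 by simp
  moreover have "degree (lucasU k :: 'a poly) \<le> Suc k" using 3 by simp
  ultimately show ?case by (simp add: degree_diff_le)
qed simp_all

lemma coeff_lucasU_Suc: "coeff (lucasU (Suc k) :: 'a::comm_ring_1 poly) k = 1"
proof (induction k rule: lucasU.induct)
  case (3 k)
  have "coeff (lucasU (Suc k) :: 'a poly) (Suc (Suc k)) = 0"
    using degree_lucasU_le[of "Suc k", where 'a = 'a] by (intro coeff_eq_0) simp
  then show ?case using 3 by (simp add: coeff_pCons)
qed simp_all

lemma degree_lucasU_Suc: "degree (lucasU (Suc k) :: 'a::comm_ring_1 poly) = k"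
  using degree_lucasU_le[of "Suc k", where 'a = 'a] coeff_lucasU_Suc[of k, where 'a = 'a]
    le_degree[of "lucasU (Suc k) :: 'a poly" k]
  by simp

lemma lucasU_Suc_nonzero: "(lucasU (Suc k) :: 'a::comm_ring_1 poly) \<noteq> 0"
  using coeff_lucasU_Suc[of k, where 'a = 'a] by auto

lemma poly_lucasU_uminus: "poly (lucasU k) (- x) = (-1) ^ (k + 1) * poly (lucasU k) (x :: 'a::comm_ring_1)"
  by (induction k rule: lucasU.induct) (auto simp: algebra_simps)

lemma poly_lucasU_two: "poly (lucasU k) (2 :: 'a::comm_ring_1) = of_nat k"
  by (induction k rule: lucasU.induct) (auto simp: algebra_simps)

lemma poly_lucasU_recurrence_solution:
  fixes u :: "nat \<Rightarrow> 'a::comm_ring_1"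
  assumes "u 0 = 0" and "\<And>i. i < N \<Longrightarrow> u (i + 2) = x * u (i + 1) - u i" and "j \<le> N + 1"
  shows "u j = u 1 * poly (lucasU j) x"
  using assms(3)
proof (induction j rule: lucasU.induct)
  case (3 k)
  then have "u (k + 2) = x * u (k + 1) - u k" using assms(2) by simp
  with 3 show ?case by (simp add: algebra_simps)
qed (simp_all add: assms(1))

(* w shifted by one and padded with a zero at either end, so that all rows of T w = ev w
   become the same three-term recurrence. *)
definition zero_padded :: "'a::zero vec \<Rightarrow> nat \<Rightarrow> 'a" where
  "zero_padded w j = (if 0 < j \<and> j \<le> dim_vec w then w $ (j - 1) else 0)"

lemma tridiag_toeplitz_mult_vec_nth:
  assumes w: "w \<in> carrier_vec n" and i: "i < n"
  shows "(tridiag_toeplitz n a b *\<^sub>v w) $ i =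
    b * zero_padded w i + a * zero_padded w (i + 1) + b * zero_padded w (i + 2)"
proof -
  let ?u = "zero_padded w"
  have "(tridiag_toeplitz n a b *\<^sub>v w) $ i =
      (\<Sum>j<n. (if i = j then a else if i = j + 1 \<or> j = i + 1 then b else 0) * w $ j)"
    using w i by (simp add: tridiag_toeplitz_def scalar_prod_def lessThan_atLeast0)
  also have "\<dots> = (\<Sum>j<n. (if j + 1 = i then b * w $ j else 0) + (if j = i then a * w $ j else 0)
      + (if j = i + 1 then b * w $ j else 0))"
    by (intro sum.cong) auto
  also have "\<dots> = b * ?u i + a * ?u (i + 1) + b * ?u (i + 2)"
    using w i by (cases i) (auto simp: sum.distrib zero_padded_def)
  finally show ?thesis .
qed

lemma tridiag_toeplitz_eigen_equation_iff:
  fixes a b ev :: "'a::field"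
  assumes b: "b \<noteq> 0" and w: "w \<in> carrier_vec n"
  shows "tridiag_toeplitz n a b *\<^sub>v w = ev \<cdot>\<^sub>v w \<longleftrightarrow>
    (\<forall>i<n. zero_padded w (i + 2) = (ev - a) / b * zero_padded w (i + 1) - zero_padded w i)"
proof -
  let ?T = "tridiag_toeplitz n a b" and ?u = "zero_padded w"
  have "?T *\<^sub>v w = ev \<cdot>\<^sub>v w \<longleftrightarrow> (\<forall>i<n. (?T *\<^sub>v w) $ i = ev * ?u (i + 1))"
    using w by (auto simp: vec_eq_iff zero_padded_def)
  also have "\<dots> \<longleftrightarrow> (\<forall>i<n. b * ?u i + a * ?u (i + 1) + b * ?u (i + 2) = ev * ?u (i + 1))"
    by (simp add: tridiag_toeplitz_mult_vec_nth[OF w] del: index_mult_mat_vec)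
  also have "\<dots> \<longleftrightarrow> (\<forall>i<n. ?u (i + 2) = (ev - a) / b * ?u (i + 1) - ?u i)"
  proof -
    have "b * u0 + a * u1 + b * u2 = ev * u1 \<longleftrightarrow> u2 = (ev - a) / b * u1 - u0" for u0 u1 u2
      using b by (auto simp: field_simps)
    then show ?thesis by presburger
  qed
  finally show ?thesis .
qed

lemma eigenvalue_tridiag_toeplitz_iff:
  fixes a b ev :: "'a::field"
  assumes b: "b \<noteq> 0" and n: "0 < n"
  shows "eigenvalue (tridiag_toeplitz n a b) ev \<longleftrightarrow> poly (lucasU (n + 1)) ((ev - a) / b) = 0"
proof
  let ?T = "tridiag_toeplitz n a b" and ?x = "(ev - a) / b"
  assume "eigenvalue ?T ev"
  then obtain w where w: "w \<in> carrier_vec n" "w \<noteq> 0\<^sub>v n" and ev: "?T *\<^sub>v w = ev \<cdot>\<^sub>v w"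
    unfolding eigenvalue_def eigenvector_def by auto
  let ?u = "zero_padded w"
  have u: "?u j = ?u 1 * poly (lucasU j) ?x" if "j \<le> n + 1" for j
    using w(1) ev tridiag_toeplitz_eigen_equation_iff[OF b w(1)] that
    by (intro poly_lucasU_recurrence_solution[of _ n]) (auto simp: zero_padded_def)
  have "?u 1 \<noteq> 0"
  proof
    assume "?u 1 = 0"
    then have "w $ i = 0" if "i < n" for i
      using u[of "i + 1"] that w(1) by (simp add: zero_padded_def)
    then show False using w by (auto simp: vec_eq_iff)
  qed
  moreover have "?u (n + 1) = 0" using w(1) by (simp add: zero_padded_def)
  ultimately show "poly (lucasU (n + 1)) ?x = 0" using u[of "n + 1"] by simp
next
  let ?T = "tridiag_toeplitz n a b" and ?x = "(ev - a) / b"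
  assume root: "poly (lucasU (n + 1)) ?x = 0"
  define w where "w = vec n (\<lambda>j. poly (lucasU (j + 1)) ?x)"
  have w: "w \<in> carrier_vec n" unfolding w_def by simp
  have u: "zero_padded w j = poly (lucasU j) ?x" if "j \<le> n + 1" for j
    using that root by (cases j) (auto simp: zero_padded_def w_def le_Suc_eq)
  have "?T *\<^sub>v w = ev \<cdot>\<^sub>v w"
    unfolding tridiag_toeplitz_eigen_equation_iff[OF b w] by (simp add: u numeral_eq_Suc)
  moreover have "w \<noteq> 0\<^sub>v n" using n by (auto simp: w_def vec_eq_iff)
  ultimately show "eigenvalue ?T ev"
    using w unfolding eigenvalue_def eigenvector_def by auto
qed

section \<open>Lucas polynomials in odd characteristic\<close>

lemma lucasU_binet_dvd:
  fixes Y Z m :: "'a::comm_ring_1"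
  assumes "m dvd Y * Z - 1"
  shows "m dvd poly (lucasU k) (Y + Z) * (Y - Z) - (Y ^ k - Z ^ k)"
proof (induction k rule: lucasU.induct)
  case (3 k)
  let ?D = "\<lambda>j. poly (lucasU j) (Y + Z) * (Y - Z) - (Y ^ j - Z ^ j)"
  have "?D (Suc (Suc k)) = (Y + Z) * ?D (Suc k) - ?D k + (Y * Z - 1) * (Y ^ k - Z ^ k)"
    by (simp add: algebra_simps)
  then show ?case using 3 assms by simp
qed simp_all

lemma poly_lucasU_binet:
  fixes y :: "'a::field"
  assumes "y \<noteq> 0"
  shows "poly (lucasU k) (y + inverse y) * (y - inverse y) = y ^ k - inverse y ^ k"
  using lucasU_binet_dvd[of 0 y "inverse y" k] assms by simp

lemma poly_lucasU_const: "poly (lucasU k) [:x:] = [:poly (lucasU k) x:]"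
  by (induction k rule: lucasU.induct) (simp_all add: algebra_simps)

(* Binet's formula in F[t]/(t^2 - x t + 1), where t and x - t are the two roots of
   T^2 - x T + 1. *)
lemma lucasU_binet_cong:
  fixes x :: "'a::field"
  shows "[[:poly (lucasU j) x:] * ([:0, 1:] - [:x, -1:]) = [:0, 1:] ^ j - [:x, -1:] ^ j] (mod [:1, -x, 1:])"
proof -
  have eq: "[:0, 1:] * [:x, -1:] - 1 = - [:1, -x, 1:]" by (simp add: one_pCons)
  have "[:1, -x, 1:] dvd [:0, 1:] * [:x, -1:] - 1" by (simp only: eq dvd_minus_iff dvd_refl)
  then show ?thesis
    using lucasU_binet_dvd[of "[:1, -x, 1:]" "[:0, 1:]" "[:x, -1:]" j]
    by (simp add: cong_iff_dvd_diff poly_lucasU_const)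
qed

lemma power_diff_CHAR_power:
  fixes x y :: "'a::comm_ring_1"
  assumes "prime CHAR('a)" and "odd CHAR('a)"
  shows "(x - y) ^ (CHAR('a) ^ r) = x ^ (CHAR('a) ^ r) - y ^ (CHAR('a) ^ r)"
  using freshmans_dream'[OF assms(1) refl, of x "- y" r] assms(2) by simp

lemma smult_eq_0_if_dvd_square_const:
  fixes f V :: "'a::field poly"
  assumes f: "0 < degree f" and V: "[V ^ 2 = [:c:]] (mod f)" and c: "c \<noteq> 0"
    and dvd: "f dvd smult d V"
  shows "d = 0"
proof -
  have "f dvd smult d V * V" using dvd by (rule dvd_mult2)
  then have "[[:d:] * V ^ 2 = 0] (mod f)"
    by (simp add: cong_iff_dvd_diff power2_eq_square)
  moreover have "[[:d:] * V ^ 2 = [:d * c:]] (mod f)"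
    using cong_mult[OF cong_refl V, of "[:d:]"] by (simp add: mult.commute)
  ultimately have "f dvd [:d * c:]"
    by (metis cong_iff_dvd_diff cong_sym cong_trans diff_zero)
  then have "d * c = 0"
    using dvd_imp_degree_le[of f "[:d * c:]"] f by fastforce
  then show ?thesis using c by simp
qed

lemma poly_lucasU_mult_CHAR_power:
  fixes x :: "'a::field"
  assumes p: "prime CHAR('a)" "odd CHAR('a)" and x: "x\<^sup>2 \<noteq> 4"
  shows "poly (lucasU (CHAR('a) ^ r * k)) x =
    poly (lucasU k) x ^ CHAR('a) ^ r * (x\<^sup>2 - 4) ^ ((CHAR('a) ^ r - 1) div 2)"
proof -
  define q h c where "q = CHAR('a) ^ r" and "h = (q - 1) div 2" and "c = x\<^sup>2 - 4"
  define Q where "Q j = poly (lucasU j) x" for j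
  define f Y Z :: "'a poly" where "f = [:1, -x, 1:]" and "Y = [:0, 1:]" and "Z = [:x, -1:]"
  define V where "V = Y - Z"
  have binet: "[[:Q j:] * V = Y ^ j - Z ^ j] (mod f)" for j
    using lucasU_binet_cong[of j x] by (simp add: Q_def V_def Y_def Z_def f_def)
  have V2: "[V ^ 2 = [:c:]] (mod f)"
  proof -
    have "V ^ 2 = [:c:] + [:4:] * f"
      by (simp add: V_def Y_def Z_def f_def c_def power2_eq_square algebra_simps)
    then show ?thesis by (simp add: cong_iff_dvd_diff dvd_smult)
  qed
  have "odd q" using p(2) by (simp add: q_def)
  then have V_pow: "V ^ q = V * (V ^ 2) ^ h" by (simp add: h_def power_mult[symmetric] flip: power_Suc)
  have frob: "Y ^ (q * k) - Z ^ (q * k) = (Y ^ k - Z ^ k) ^ q"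
    using power_diff_CHAR_power[of "Y ^ k" "Z ^ k" r] p
    by (simp add: q_def power_mult[symmetric] mult.commute)
  have pow_cong: "[[:Q (q * k):] * V = [:Q k ^ q * c ^ h:] * V] (mod f)"
  proof -
    have "[[:Q (q * k):] * V = ([:Q k:] * V) ^ q] (mod f)"
      using binet[of "q * k"] cong_pow[OF cong_sym[OF binet[of k]], of q] frob
      by (metis cong_trans)
    also have "([:Q k:] * V) ^ q = [:Q k ^ q:] * V * (V ^ 2) ^ h"
      by (simp add: smult_power V_pow)
    also have "[\<dots> = [:Q k ^ q:] * V * [:c:] ^ h] (mod f)"
      by (intro cong_mult cong_refl cong_pow V2)
    also have "[:Q k ^ q:] * V * [:c:] ^ h = [:Q k ^ q * c ^ h:] * V"
      by (simp add: poly_const_pow algebra_simps)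
    finally show ?thesis .
  qed
  define d where "d = Q (q * k) - Q k ^ q * c ^ h"
  have "f dvd smult d V"
    using pow_cong unfolding d_def cong_iff_dvd_diff by (simp add: smult_diff_left)
  moreover have "c \<noteq> 0" using x by (simp add: c_def)
  ultimately have "d = 0" using V2 by (intro smult_eq_0_if_dvd_square_const[of f]) (simp_all add: f_def)
  then show ?thesis by (simp add: d_def Q_def q_def h_def c_def)
qed

lemma primitive_root_of_unity_power_eq_1_iff:
  assumes "primitive_root_of_unity k \<theta>" and "j < k"
  shows "\<theta> ^ j = 1 \<longleftrightarrow> j = 0"
  using assms unfolding primitive_root_of_unity_def by auto

lemma primitive_root_of_unity_nonzero:
  "primitive_root_of_unity k (\<theta> :: 'a::field) \<Longrightarrow> \<theta> \<noteq> 0"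
  unfolding primitive_root_of_unity_def by (auto simp: zero_power)

lemma primitive_root_of_unity_power_inj:
  fixes \<theta> :: "'a::field"
  assumes \<theta>: "primitive_root_of_unity k \<theta>" and "i < k" "j < k" and eq: "\<theta> ^ i = \<theta> ^ j"
  shows "i = j"
proof -
  have "\<theta> \<noteq> 0" using primitive_root_of_unity_nonzero[OF \<theta>] .
  have *: "i = j" if "i \<le> j" "j < k" "\<theta> ^ i = \<theta> ^ j" for i j
  proof -
    have "\<theta> ^ i * \<theta> ^ (j - i) = \<theta> ^ i * 1"
      using that by (metis le_add_diff_inverse power_add mult_1_right)
    then have "\<theta> ^ (j - i) = 1" using \<open>\<theta> \<noteq> 0\<close> by simp
    then show ?thesis
      using primitive_root_of_unity_power_eq_1_iff[OF \<theta>, of "j - i"] that by simp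
  qed
  show ?thesis using *[of i j] *[of j i] assms by (cases "i \<le> j") auto
qed

lemma poly_lucasU_add_inverse_eq_0:
  fixes y :: "'a::field"
  assumes y0: "y \<noteq> 0" and y: "y ^ (2 * k) = 1" "y\<^sup>2 \<noteq> 1"
  shows "poly (lucasU k) (y + inverse y) = 0"
proof -
  have "y ^ k * y ^ k = 1" using y(1) by (simp add: mult_2 power_add)
  then have "y ^ k = inverse y ^ k" by (metis inverse_unique power_inverse)
  moreover have "y - inverse y \<noteq> 0"
    using y0 y(2) by (auto simp: field_simps power2_eq_square)
  ultimately show ?thesis using poly_lucasU_binet[OF y0, of k] by simp
qed

lemma primitive_root_of_unity_inj_on_add_inverse:
  fixes \<theta> :: "'a::field"
  assumes \<theta>: "primitive_root_of_unity (2 * (m + 1)) \<theta>"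
  shows "inj_on (\<lambda>i. \<theta> ^ i + inverse (\<theta> ^ i)) {1..m}"
proof (rule inj_onI)
  fix i j assume i: "i \<in> {1..m}" and j: "j \<in> {1..m}" and eq: "\<theta> ^ i + inverse (\<theta> ^ i) = \<theta> ^ j + inverse (\<theta> ^ j)"
  have \<theta>0: "\<theta> \<noteq> 0" using primitive_root_of_unity_nonzero[OF \<theta>] .
  have "(\<theta> ^ i - \<theta> ^ j) * (\<theta> ^ i * \<theta> ^ j - 1) = 0"
    using eq \<theta>0 by (simp add: field_simps)
  moreover have "\<theta> ^ i * \<theta> ^ j \<noteq> 1"
    using primitive_root_of_unity_power_eq_1_iff[OF \<theta>, of "i + j"] i j by (simp add: power_add)
  ultimately have "\<theta> ^ i = \<theta> ^ j" by simp
  then show "i = j" using primitive_root_of_unity_power_inj[OF \<theta>] i j by simp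
qed

lemma poly_lucasU_eq_0_iff:
  fixes \<theta> x :: "'a::field"
  assumes \<theta>: "primitive_root_of_unity (2 * (m + 1)) \<theta>"
  shows "poly (lucasU (m + 1)) x = 0 \<longleftrightarrow> (\<exists>i. 1 \<le> i \<and> i \<le> m \<and> x = \<theta> ^ i + inverse (\<theta> ^ i))"
proof -
  let ?c = "\<lambda>i. \<theta> ^ i + inverse (\<theta> ^ i)"
  let ?R = "{x. poly (lucasU (m + 1)) x = (0::'a)}"
  have "?c i \<in> ?R" if i: "i \<in> {1..m}" for i
  proof -
    have "(\<theta> ^ i) ^ (2 * (m + 1)) = (\<theta> ^ (2 * (m + 1))) ^ i" by (metis power_mult mult.commute)
    also have "\<dots> = 1" using \<theta> unfolding primitive_root_of_unity_def by simp
    finally have unity: "(\<theta> ^ i) ^ (2 * (m + 1)) = 1" .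
    have "(\<theta> ^ i)\<^sup>2 \<noteq> 1"
      using primitive_root_of_unity_power_eq_1_iff[OF \<theta>, of "i * 2"] i by (simp flip: power_mult)
    moreover have "\<theta> ^ i \<noteq> 0" using primitive_root_of_unity_nonzero[OF \<theta>] by simp
    ultimately have "poly (lucasU (m + 1)) (?c i) = 0"
      using unity by (intro poly_lucasU_add_inverse_eq_0)
    then show ?thesis by simp
  qed
  then have sub: "?c ` {1..m} \<subseteq> ?R" by auto
  have fin: "finite ?R" using poly_roots_finite[OF lucasU_Suc_nonzero[of m]] by simp
  have "card (?c ` {1..m}) = m"
    using primitive_root_of_unity_inj_on_add_inverse[OF \<theta>] by (simp add: card_image)
  moreover have "card ?R \<le> m"
    using card_poly_roots_bound[OF lucasU_Suc_nonzero[of m, where 'a = 'a]]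
      degree_lucasU_Suc[of m, where 'a = 'a] by simp
  ultimately have "?c ` {1..m} = ?R"
    using card_mono[OF fin sub] by (intro card_subset_eq[OF fin sub]) simp
  then have "x \<in> ?R \<longleftrightarrow> x \<in> ?c ` {1..m}" by simp
  then show ?thesis unfolding image_iff atLeastAtMost_iff by auto
qed

lemma poly_lucasU_CHAR_power_eq_0_iff:
  fixes \<theta> x :: "'a::field"
  assumes p: "prime CHAR('a)" "odd CHAR('a)" and r: "r \<ge> 1"
    and \<theta>: "primitive_root_of_unity (2 * (m + 1)) \<theta>"
  shows "poly (lucasU (CHAR('a) ^ r * (m + 1))) x = 0 \<longleftrightarrow>
    x = 2 \<or> x = -2 \<or> (\<exists>i. 1 \<le> i \<and> i \<le> m \<and> x = \<theta> ^ i + inverse (\<theta> ^ i))"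
proof (cases "x\<^sup>2 = 4")
  case True
  then have "x = 2 \<or> x = -2"
    using power2_eq_iff[of x 2] by simp
  moreover have "CHAR('a) dvd CHAR('a) ^ r * (m + 1)"
    using r by (simp add: dvd_power)
  then have "poly (lucasU (CHAR('a) ^ r * (m + 1))) (2::'a) = 0"
    by (simp only: poly_lucasU_two of_nat_eq_0_iff_char_dvd)
  ultimately show ?thesis by (auto simp: poly_lucasU_uminus)
next
  case False
  then have "x \<noteq> 2" "x \<noteq> -2" "x\<^sup>2 - 4 \<noteq> 0" by auto
  moreover have "CHAR('a) ^ r \<noteq> 0" using p(1) by (simp add: prime_gt_0_nat)
  ultimately show ?thesis
    using poly_lucasU_mult_CHAR_power[OF p False, of r "m + 1"] poly_lucasU_eq_0_iff[OF \<theta>] by simp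
qed

section \<open>Passing to an extension field\<close>

lemma field_embedding_field_hom: "field_embedding emb \<Longrightarrow> field_hom emb"
  unfolding field_embedding_def
proof (unfold_locales, goal_cases)
  case 1
  then have "emb 0 + emb 0 = emb 0 + 0" by (metis add_0 add_0_right)
  then show ?case by (rule add_left_imp_eq)
qed auto

lemma (in field_hom) CHAR_eq: "CHAR('a) = CHAR('b)"
proof (rule CHAR_eqI)
  show "of_nat CHAR('b) = (0::'a)"
    using hom_0_iff[of "of_nat CHAR('b)"] by (simp add: hom_of_nat)
  show "CHAR('b) dvd x" if "of_nat x = (0::'a)" for x
    using that hom_0_iff[of "of_nat x"] by (simp add: hom_of_nat of_nat_eq_0_iff_char_dvd)
qed

lemma (in field_hom) map_tridiag_toeplitz:
  "map_mat hom (tridiag_toeplitz n a b) = tridiag_toeplitz n (hom a) (hom b)"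
  by (rule eq_matI) (auto simp: tridiag_toeplitz_def)

lemma is_LCD_hatC_iff_lucasU:
  fixes a b :: "'a::field" and emb :: "'a \<Rightarrow> 'b::field"
  assumes emb: "field_hom emb" and b: "b \<noteq> 0" and n: "0 < n" and \<mu>: "\<mu>\<^sup>2 = -1"
  shows "is_LCD (2 * n) (hatC n a b) \<longleftrightarrow>
    (\<forall>ev\<in>{\<mu>, -\<mu>}. poly (lucasU (n + 1)) ((emb a - ev) / emb b) \<noteq> 0)"
proof -
  interpret field_hom emb by (rule emb)
  let ?T = "tridiag_toeplitz n a b" and ?T' = "tridiag_toeplitz n (emb a) (emb b)"
  have "map_mat emb (1\<^sub>m n + ?T * ?T) = map_mat emb (1\<^sub>m n) + map_mat emb (?T * ?T)"
    by (intro eq_matI) (auto simp: hom_add)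
  also have "\<dots> = 1\<^sub>m n + ?T' * ?T'"
    by (simp add: mat_hom_one mat_hom_mult[OF tridiag_toeplitz_carrier tridiag_toeplitz_carrier]
        map_tridiag_toeplitz)
  finally have "map_mat emb (1\<^sub>m n + ?T * ?T) = 1\<^sub>m n + ?T' * ?T'" .
  then have "is_LCD (2 * n) (hatC n a b) \<longleftrightarrow> det (1\<^sub>m n + ?T' * ?T') \<noteq> 0"
    by (metis is_LCD_hatC_iff_det hom_det hom_0_iff)
  also have "\<dots> \<longleftrightarrow> \<not> eigenvalue ?T' \<mu> \<and> \<not> eigenvalue ?T' (- \<mu>)"
    using det_one_plus_square_eq_0_iff[OF tridiag_toeplitz_carrier \<mu>] by simp
  also have "\<dots> \<longleftrightarrow> (\<forall>ev\<in>{\<mu>, -\<mu>}. poly (lucasU (n + 1)) ((ev - emb a) / emb b) \<noteq> 0)"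
    using b n by (simp add: eigenvalue_tridiag_toeplitz_iff)
  also have "\<dots> \<longleftrightarrow> (\<forall>ev\<in>{\<mu>, -\<mu>}. poly (lucasU (n + 1)) ((emb a - ev) / emb b) \<noteq> 0)"
    using poly_lucasU_uminus[of "n + 1" "(emb a - ev) / emb b" for ev] by (simp add: minus_divide_left)
  finally show ?thesis .
qed

theorem theorem2p10:
  fixes a b :: "'a::{field, finite}"
    and emb :: "'a \<Rightarrow> 'b::field"
    and \<mu> \<theta> :: 'b
    and p n r m :: nat
  assumes p_prime: "prime p" and p_odd: "odd p" and char: "CHAR('a) = p"
    and b_nz: "b \<noteq> 0" and n_ge: "n \<ge> 2"
    and r_div: "p ^ r dvd n + 1" and r_exact: "\<not> p ^ (r + 1) dvd n + 1"
    and m_def: "n + 1 = p ^ r * (m + 1)"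
    and r_pos: "r \<ge> 1"
    and emb: "field_embedding emb"
    and mu: "\<mu>\<^sup>2 = -1"
    and theta: "primitive_root_of_unity (2 * (m + 1)) \<theta>"
  shows "(m > 0 \<longrightarrow>
            (is_LCD (2 * n) (hatC n a b) \<longleftrightarrow>
              emb a / emb b \<notin>
                {- \<mu> / emb b + 2, - \<mu> / emb b - 2, \<mu> / emb b + 2, \<mu> / emb b - 2}
                \<union> {- \<mu> / emb b + \<theta> ^ i + inverse (\<theta> ^ i) | i. 1 \<le> i \<and> i \<le> m}
                \<union> {\<mu> / emb b + \<theta> ^ i + inverse (\<theta> ^ i) | i. 1 \<le> i \<and> i \<le> m}))
       \<and> (m = 0 \<longrightarrow>
            (is_LCD (2 * n) (hatC n a b) \<longleftrightarrow>
              emb a / emb b \<notin>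
                {- \<mu> / emb b + 2, - \<mu> / emb b - 2, \<mu> / emb b + 2, \<mu> / emb b - 2}))"
proof -
  \<comment> \<open>Only \<open>n + 1 = p ^ r * (m + 1)\<close> with \<open>r \<ge> 1\<close> is used.\<close>
  have hom: "field_hom emb" using emb by (rule field_embedding_field_hom)
  interpret field_hom emb by (rule hom)
  have CHAR_b: "CHAR('b) = p" using char CHAR_eq by simp
  define S where "S = {2, -2} \<union> {\<theta> ^ i + inverse (\<theta> ^ i) | i. 1 \<le> i \<and> i \<le> m}"
  have roots: "poly (lucasU (Suc n)) y = 0 \<longleftrightarrow> y \<in> S" for y
    using poly_lucasU_CHAR_power_eq_0_iff[OF _ _ r_pos theta, of y] p_prime p_odd
    unfolding CHAR_b Suc_eq_plus1 m_def S_def by auto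
  have shift: "(emb a - ev) / emb b = s \<longleftrightarrow> emb a / emb b = ev / emb b + s" for ev s
    using b_nz by (auto simp: field_simps)
  have "is_LCD (2 * n) (hatC n a b) \<longleftrightarrow> (\<forall>ev\<in>{\<mu>, -\<mu>}. (emb a - ev) / emb b \<notin> S)"
    using n_ge by (simp add: is_LCD_hatC_iff_lucasU[OF hom b_nz _ mu] roots)
  also have "\<dots> \<longleftrightarrow> emb a / emb b \<notin>
                {- \<mu> / emb b + 2, - \<mu> / emb b - 2, \<mu> / emb b + 2, \<mu> / emb b - 2}
                \<union> {- \<mu> / emb b + \<theta> ^ i + inverse (\<theta> ^ i) | i. 1 \<le> i \<and> i \<le> m}
                \<union> {\<mu> / emb b + \<theta> ^ i + inverse (\<theta> ^ i) | i. 1 \<le> i \<and> i \<le> m}"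
    unfolding S_def by (auto simp: shift add.assoc)
  finally show ?thesis by auto
qed

end
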